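(* In the Part I procedure, let $xy$ be an edge processed in a bridge step of phase $\Delta$ whose skewness $|\mathrm{lcp}(x)-\mathrm{lcp}(y)|$ is neither $0$ nor $2$, and let $z$ be a vertex that becomes even in this bridge step. Then $\mathrm{lcp}(z)>\max(\mathrm{lcp}(x),\mathrm{lcp}(y))$. Consequently, any bridge of phase $\Delta$ having $z$ as an endpoint has skewness larger than that of $xy$.
   Context: Let $G=(V,E)$ be a finite undirected graph and $M$ a matching in $G$; free vertices and $\mathit{mate}(v)$ are as usual. The Part I procedure maintains a search structure $S$: a forest whose nodes are either single (odd) vertices or blossoms (disjoint vertex sets with a distinguished base vertex), each tree rooted at a blossom containing a free vertex. Vertices in $S$ are labelled even (those in blossoms) or odd; vertices not in $S$ are unlabelled. A vertex is born even/odd according to the label it receives when inserted. The procedure maintains $\mathrm{lcp}(v)$ for even vertices and $\mathrm{lcp}_{\mathrm{odd}}(v)$ for vertices born odd. The blossom nodes currently in $S$ are the maximal blossoms. Phase $0$: every free vertex $v$ becomes the root of its own tree as a trivial blossom $\{v\}$ with base $v$, even, $\mathrm{lcp}(v)=0$. For $\Delta=1,2,\dots$, phase $\Delta$ does: (i) if $\Delta$ is even, growth steps: while some even vertex $v$ with $\mathrm{lcp}(v)=\Delta-2$ has a neighbour $x$ not in $S$, add $x$ as an odd child of the blossom containing $v$ with $\mathrm{lcp}_{\mathrm{odd}}(x)=\Delta-1$, and $\mathit{mate}(x)$ as a child of $x$, as a trivial even blossom with $\mathrm{lcp}(\mathit{mate}(x))=\Delta$; (ii) bridge steps: while there is a non-matching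 edge $xy$ with $x,y$ even, in different maximal blossoms $B_x,B_y$, and $\mathrm{lcp}(x)+\mathrm{lcp}(y)=2\Delta-2$: if $B_x,B_y$ lie in different trees the procedure stops; otherwise let $B$ be the lowest common ancestor of $B_x,B_y$; every odd vertex $z$ on the tree paths from $B_x$ and $B_y$ to $B$ becomes even with $\mathrm{lcp}(z)=\mathrm{lcp}(x)+1+\mathrm{lcp}(y)-\mathrm{lcp}_{\mathrm{odd}}(z)$, and $B$ together with all blossoms and odd vertices on both paths is merged into one new blossom with base equal to the base of $B$, replacing $B$ in the tree. The skewness of an edge $xy$ with both endpoints even is $|\mathrm{lcp}(x)-\mathrm{lcp}(y)|$. *)

theory Defs
  imports Main
begin

(* Nodes of the search structure S: blossoms (vertex sets) or single odd vertices *)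
datatype 'a node = Bn "'a set" | On 'a

datatype stage = Growth | Bridges | Stopped

record 'a st =
  nodes :: "'a node set"
  par   :: "'a node \<Rightarrow> 'a node option"
  base  :: "'a set \<Rightarrow> 'a"
  lcp   :: "'a \<Rightarrow> int"                 (* lcp(v), meaningful for even v *)
  lcpo  :: "'a \<Rightarrow> int"                 (* lcp_odd(v), meaningful for vertices born odd *)
  delta :: nat
  stage :: stage

definition graph_matching :: "'a set \<Rightarrow> 'a set set \<Rightarrow> 'a set set \<Rightarrow> bool" where
  "graph_matching V E M \<longleftrightarrow> finite V \<and>
     E \<subseteq> {{u, v} | u v. u \<noteq> v \<and> u \<in> V \<and> v \<in> V} \<and>
     M \<subseteq> E \<and> (\<forall>e1\<in>M. \<forall>e2\<in>M. e1 \<noteq> e2 \<longrightarrow> e1 \<inter> e2 = {})"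

definition free_vertex :: "'a set \<Rightarrow> 'a set set \<Rightarrow> 'a \<Rightarrow> bool" where
  "free_vertex V M v \<longleftrightarrow> v \<in> V \<and> (\<forall>e\<in>M. v \<notin> e)"

definition mate :: "'a set set \<Rightarrow> 'a \<Rightarrow> 'a" where
  "mate M x = (THE y. {x, y} \<in> M)"

definition blossoms :: "('a, 'b) st_scheme \<Rightarrow> 'a set set" where
  "blossoms s = {b. Bn b \<in> nodes s}"

definition evens :: "('a, 'b) st_scheme \<Rightarrow> 'a set" where
  "evens s = \<Union> (blossoms s)"

definition odds :: "('a, 'b) st_scheme \<Rightarrow> 'a set" where
  "odds s = {v. On v \<in> nodes s}"

definition inS :: "('a, 'b) st_scheme \<Rightarrow> 'a \<Rightarrow> bool" where
  "inS s v \<longleftrightarrow> v \<in> evens s \<or> v \<in> odds s"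

definition blossom_of :: "('a, 'b) st_scheme \<Rightarrow> 'a \<Rightarrow> 'a set" where
  "blossom_of s v = (THE b. b \<in> blossoms s \<and> v \<in> b)"

definition anc :: "('a, 'b) st_scheme \<Rightarrow> 'a node \<Rightarrow> 'a node \<Rightarrow> bool" where
  "anc s n m \<longleftrightarrow> (n, m) \<in> {(a, c). par s a = Some c}\<^sup>*"

definition is_lca :: "('a, 'b) st_scheme \<Rightarrow> 'a node \<Rightarrow> 'a node \<Rightarrow> 'a node \<Rightarrow> bool" where
  "is_lca s n1 n2 c \<longleftrightarrow> anc s n1 c \<and> anc s n2 c \<and>
     (\<forall>d. anc s n1 d \<and> anc s n2 d \<longrightarrow> anc s c d)"

definition init_st :: "'a set \<Rightarrow> 'a set set \<Rightarrow> 'a st" where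
  "init_st V M = \<lparr> nodes = {Bn {v} | v. free_vertex V M v}, par = (\<lambda>_. None),
     base = (\<lambda>b. the_elem b), lcp = (\<lambda>_. 0), lcpo = (\<lambda>_. 0), delta = 0, stage = Bridges \<rparr>"

definition growth_possible :: "'a set set \<Rightarrow> 'a st \<Rightarrow> bool" where
  "growth_possible E s \<longleftrightarrow> (\<exists>v x b. Bn b \<in> nodes s \<and> v \<in> b \<and> lcp s v + 2 = int (delta s)
      \<and> {v, x} \<in> E \<and> \<not> inS s x)"

definition grow_step :: "'a set set \<Rightarrow> 'a set set \<Rightarrow> 'a st \<Rightarrow> 'a st \<Rightarrow> bool" where
  "grow_step E M s s' \<longleftrightarrow> stage s = Growth \<and> even (delta s) \<and>
     (\<exists>v x b. Bn b \<in> nodes s \<and> v \<in> b \<and> lcp s v + 2 = int (delta s)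
      \<and> {v, x} \<in> E \<and> \<not> inS s x \<and>
      s' = s \<lparr> nodes := nodes s \<union> {On x, Bn {mate M x}},
               par := (par s)(On x := Some (Bn b), Bn {mate M x} := Some (On x)),
               base := (base s)({mate M x} := mate M x),
               lcp := (lcp s)(mate M x := int (delta s)),
               lcpo := (lcpo s)(x := int (delta s) - 1) \<rparr>)"

definition end_growth :: "'a set set \<Rightarrow> 'a st \<Rightarrow> 'a st \<Rightarrow> bool" where
  "end_growth E s s' \<longleftrightarrow> stage s = Growth \<and> (odd (delta s) \<or> \<not> growth_possible E s) \<and>
     s' = s \<lparr> stage := Bridges \<rparr>"

definition bridge_cond :: "'a set set \<Rightarrow> 'a set set \<Rightarrow> 'a st \<Rightarrow> 'a \<Rightarrow> 'a \<Rightarrow> bool" where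
  "bridge_cond E M s x y \<longleftrightarrow> {x, y} \<in> E \<and> {x, y} \<notin> M \<and> x \<in> evens s \<and> y \<in> evens s \<and>
     blossom_of s x \<noteq> blossom_of s y \<and> lcp s x + lcp s y = 2 * int (delta s) - 2"

definition stop_step :: "'a set set \<Rightarrow> 'a set set \<Rightarrow> 'a st \<Rightarrow> 'a \<Rightarrow> 'a \<Rightarrow> 'a st \<Rightarrow> bool" where
  "stop_step E M s x y s' \<longleftrightarrow> stage s = Bridges \<and> bridge_cond E M s x y \<and>
     \<not> (\<exists>c. anc s (Bn (blossom_of s x)) c \<and> anc s (Bn (blossom_of s y)) c) \<and>
     s' = s \<lparr> stage := Stopped \<rparr>"

definition bridge_step :: "'a set set \<Rightarrow> 'a set set \<Rightarrow> 'a st \<Rightarrow> 'a \<Rightarrow> 'a \<Rightarrow> 'a st \<Rightarrow> bool" where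
  "bridge_step E M s x y s' \<longleftrightarrow> stage s = Bridges \<and> bridge_cond E M s x y \<and>
     (\<exists>b. is_lca s (Bn (blossom_of s x)) (Bn (blossom_of s y)) (Bn b) \<and>
       (let Bx = Bn (blossom_of s x); By = Bn (blossom_of s y);
            P = {n. (anc s Bx n \<or> anc s By n) \<and> anc s n (Bn b)};
            Z = {z. On z \<in> P};
            NB = \<Union> {c. Bn c \<in> P} \<union> Z
        in s' = s \<lparr> nodes := (nodes s - P) \<union> {Bn NB},
                    par := (\<lambda>n. if n = Bn NB then par s (Bn b)
                                 else if n \<in> P then None
                                 else (case par s n of None \<Rightarrow> None
                                       | Some p \<Rightarrow> if p \<in> P then Some (Bn NB) else Some p)),
                    base := (base s)(NB := base s b),
                    lcp := (\<lambda>v. if v \<in> Z then lcp s x + 1 + lcp s y - lcpo s v else lcp s v) \<rparr>))"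

definition end_phase :: "'a set set \<Rightarrow> 'a set set \<Rightarrow> 'a st \<Rightarrow> 'a st \<Rightarrow> bool" where
  "end_phase E M s s' \<longleftrightarrow> stage s = Bridges \<and> \<not> (\<exists>x y. bridge_cond E M s x y) \<and>
     s' = s \<lparr> delta := Suc (delta s), stage := Growth \<rparr>"

definition step :: "'a set set \<Rightarrow> 'a set set \<Rightarrow> 'a st \<Rightarrow> 'a st \<Rightarrow> bool" where
  "step E M s s' \<longleftrightarrow> grow_step E M s s' \<or> end_growth E s s' \<or>
     (\<exists>x y. bridge_step E M s x y s') \<or> (\<exists>x y. stop_step E M s x y s') \<or> end_phase E M s s'"

definition reachable :: "'a set \<Rightarrow> 'a set set \<Rightarrow> 'a set set \<Rightarrow> 'a st \<Rightarrow> bool" where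
  "reachable V E M s \<longleftrightarrow> (step E M)\<^sup>*\<^sup>* (init_st V M) s"

definition step_in_phase :: "'a set set \<Rightarrow> 'a set set \<Rightarrow> nat \<Rightarrow> 'a st \<Rightarrow> 'a st \<Rightarrow> bool" where
  "step_in_phase E M d s s' \<longleftrightarrow> step E M s s' \<and> delta s' = d"

end

(* Every vertex u of S entered S in some phase ins u, a ghost quantity carried along in the
   invariant. Two facts about it drive the proof. An odd vertex entered S no later than every
   vertex below it in the forest, with equality only for even vertices whose label is their
   insertion phase. And every neighbour of an even vertex w is in S by phase lcp(w) + 2, the
   phase in which growth from w happens.
   Let z be an odd vertex on the path from B_y to the lowest common ancestor. Then
   lcp_odd(z) + 1 = ins z <= ins y <= lcp(y). If moreover lcp(x) < lcp(y), then y entered S by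
   phase lcp(x) + 2 via the edge xy, and equality with ins z would force lcp(y) = lcp(x) + 2,
   i.e. skewness 2; so lcp_odd(z) <= lcp(x). Hence the new label
   lcp(x) + 1 + lcp(y) - lcp_odd(z) of z exceeds both lcp(x) and lcp(y). Labels of even
   vertices never change, and every bridge of phase Delta has label sum 2 Delta - 2, so a
   bridge at z is more skewed than xy. *)

theory Submission
  imports Defs
begin

fun node_verts :: "'a node \<Rightarrow> 'a set" where
  "node_verts (Bn b) = b"
| "node_verts (On v) = {v}"

lemma node_verts_inS: "n \<in> nodes s \<Longrightarrow> u \<in> node_verts n \<Longrightarrow> inS s u"
  by (cases n) (auto simp: inS_def evens_def odds_def blossoms_def)

lemma anc_refl: "anc s a a"
  unfolding anc_def by simp

lemma anc_trans: "anc s a b \<Longrightarrow> anc s b c \<Longrightarrow> anc s a c"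
  unfolding anc_def by (meson rtrancl_trans)

lemma anc_par: "par s a = Some c \<Longrightarrow> anc s a c"
  unfolding anc_def by auto

lemma anc_par_strict:
  assumes "anc s a c" "a \<noteq> c" "par s a = Some p"
  shows "anc s p c"
proof -
  have "(a, c) \<in> {(a, c). par s a = Some c}\<^sup>*"
    using assms(1) unfolding anc_def .
  then show ?thesis
  proof (cases rule: converse_rtranclE)
    case base
    then show ?thesis using assms(2) by simp
  next
    case (step q)
    then show ?thesis using assms(3) unfolding anc_def by auto
  qed
qed

lemma anc_rank_le:
  assumes "\<forall>n p. par s n = Some p \<longrightarrow> rk p < (rk :: 'a node \<Rightarrow> nat) n" "anc s n m"
  shows "rk m \<le> rk n"
  using assms(2) unfolding anc_def
proof (induction rule: rtrancl_induct)
  case (step k l)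
  then show ?case using assms(1) by fastforce
qed simp

lemma the_matched_unique:
  assumes gm: "graph_matching V E M" and ab: "{a, b} \<in> M" and ac: "{a, c} \<in> M"
  shows "b = c"
proof -
  have "E \<subseteq> {{u, v} | u v. u \<noteq> v \<and> u \<in> V \<and> v \<in> V}" "M \<subseteq> E"
    and disj: "\<forall>e1\<in>M. \<forall>e2\<in>M. e1 \<noteq> e2 \<longrightarrow> e1 \<inter> e2 = {}"
    using gm unfolding graph_matching_def by simp_all
  then have "{a, b} \<in> {{u, v} | u v. u \<noteq> v \<and> u \<in> V \<and> v \<in> V}"
    using ab by blast
  then obtain u v where uv: "{a, b} = {u, v}" "u \<noteq> v" by blast
  have "a \<noteq> b"
  proof
    assume "a = b"
    then have "u \<in> {a}" "v \<in> {a}" using uv(1) by auto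
    then show False using uv(2) by simp
  qed
  have "{a, b} = {a, c}"
  proof (rule ccontr)
    assume "{a, b} \<noteq> {a, c}"
    then have "{a, b} \<inter> {a, c} = {}" using disj[rule_format, OF ab ac] by simp
    then show False by simp
  qed
  with \<open>a \<noteq> b\<close> show ?thesis by (simp add: doubleton_eq_iff)
qed

lemma mate_eq:
  assumes gm: "graph_matching V E M" and ab: "{a, b} \<in> M"
  shows "mate M a = b"
  unfolding mate_def
proof (rule the_equality)
  fix c
  assume "{a, c} \<in> M"
  then show "c = b" using the_matched_unique[OF gm _ ab] by simp
qed (rule ab)

lemma blossom_of_mem:
  assumes disj: "\<forall>b1\<in>blossoms s. \<forall>b2\<in>blossoms s. b1 \<noteq> b2 \<longrightarrow> b1 \<inter> b2 = {}"
    and "x \<in> evens s"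
  shows "blossom_of s x \<in> blossoms s" "x \<in> blossom_of s x"
proof -
  obtain b where b: "b \<in> blossoms s" "x \<in> b"
    using assms(2) unfolding evens_def by auto
  have "c = b" if "c \<in> blossoms s \<and> x \<in> c" for c
    using disj b that by blast
  then have "blossom_of s x = b"
    unfolding blossom_of_def using b by (intro the_equality) blast+
  then show "blossom_of s x \<in> blossoms s" "x \<in> blossom_of s x"
    using b by simp_all
qed

definition even_labels_kept :: "'a st \<Rightarrow> 'a st \<Rightarrow> bool" where
  "even_labels_kept s s' \<longleftrightarrow> evens s \<subseteq> evens s' \<and> (\<forall>u\<in>evens s. lcp s' u = lcp s u)"

lemma even_labels_kept_refl: "even_labels_kept s s"
  unfolding even_labels_kept_def by simp

lemma even_labels_kept_trans:
  "even_labels_kept s t \<Longrightarrow> even_labels_kept t u \<Longrightarrow> even_labels_kept s u"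
  unfolding even_labels_kept_def by auto

definition par_closed :: "'a st \<Rightarrow> bool" where
  "par_closed s \<longleftrightarrow> (\<forall>n p. par s n = Some p \<longrightarrow> n \<in> nodes s \<and> p \<in> nodes s)"

definition par_ranked :: "'a st \<Rightarrow> bool" where
  "par_ranked s \<longleftrightarrow> (\<exists>rk :: 'a node \<Rightarrow> nat. \<forall>n p. par s n = Some p \<longrightarrow> rk p < rk n)"

definition blossoms_disjoint :: "'a st \<Rightarrow> bool" where
  "blossoms_disjoint s \<longleftrightarrow>
     (\<forall>b1\<in>blossoms s. \<forall>b2\<in>blossoms s. b1 \<noteq> b2 \<longrightarrow> b1 \<inter> b2 = {}) \<and>
     (\<forall>b\<in>blossoms s. b \<noteq> {}) \<and> evens s \<inter> odds s = {}"

definition mate_closed :: "'a set \<Rightarrow> 'a set set \<Rightarrow> 'a st \<Rightarrow> bool" where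
  "mate_closed V M s \<longleftrightarrow>
     (\<forall>v. free_vertex V M v \<longrightarrow> inS s v) \<and> (\<forall>u w. inS s u \<longrightarrow> {u, w} \<in> M \<longrightarrow> inS s w)"

text \<open>\<open>ins u\<close> is the phase in which \<open>u\<close> entered \<open>S\<close>; the procedure does not record it.\<close>

definition labels_consistent :: "'a st \<Rightarrow> ('a \<Rightarrow> int) \<Rightarrow> bool" where
  "labels_consistent s ins \<longleftrightarrow>
     (\<forall>z\<in>odds s. ins z = lcpo s z + 1 \<and> odd (lcpo s z)) \<and>
     (\<forall>y\<in>evens s. ins y \<le> lcp s y \<and> even (lcp s y)) \<and>
     (\<forall>u. inS s u \<longrightarrow> ins u \<le> int (delta s))"

definition odd_ancestors_earlier :: "'a st \<Rightarrow> ('a \<Rightarrow> int) \<Rightarrow> bool" where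
  "odd_ancestors_earlier s ins \<longleftrightarrow>
     (\<forall>n z u. n \<in> nodes s \<longrightarrow> anc s n (On z) \<longrightarrow> n \<noteq> On z \<longrightarrow> u \<in> node_verts n \<longrightarrow>
        ins z \<le> ins u \<and> (ins z = ins u \<longrightarrow> u \<in> evens s \<and> lcp s u = ins u))"

text \<open>Growth from an even vertex \<open>y\<close> happens in phase \<open>lcp y + 2\<close>.\<close>

definition edges_explored :: "'a set set \<Rightarrow> 'a st \<Rightarrow> ('a \<Rightarrow> int) \<Rightarrow> bool" where
  "edges_explored E s ins \<longleftrightarrow>
     (\<forall>y x. y \<in> evens s \<longrightarrow> {y, x} \<in> E \<longrightarrow>
        (lcp s y + 2 < int (delta s) \<or> (lcp s y + 2 = int (delta s) \<and> stage s \<noteq> Growth)) \<longrightarrow>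
        inS s x \<and> ins x \<le> lcp s y + 2)"

definition search_invariant ::
    "'a set \<Rightarrow> 'a set set \<Rightarrow> 'a set set \<Rightarrow> 'a st \<Rightarrow> ('a \<Rightarrow> int) \<Rightarrow> bool" where
  "search_invariant V E M s ins \<longleftrightarrow>
     par_closed s \<and> par_ranked s \<and> blossoms_disjoint s \<and> mate_closed V M s \<and>
     labels_consistent s ins \<and> odd_ancestors_earlier s ins \<and> edges_explored E s ins"

lemma anc_in_nodes:
  assumes "par_closed s" "anc s n m" "n \<in> nodes s"
  shows "m \<in> nodes s"
  using assms(2,3) unfolding anc_def
proof (induction rule: rtrancl_induct)
  case (step k l)
  then show ?case using assms(1) unfolding par_closed_def by auto
qed

lemma mate_not_in_S:
  assumes gm: "graph_matching V E M" and closed: "mate_closed V M s"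
    and vx: "{v, x} \<in> E" and x_new: "\<not> inS s x"
  shows "{x, mate M x} \<in> M" "mate M x \<noteq> x" "\<not> inS s (mate M x)"
proof -
  have Esub: "E \<subseteq> {{u, v} | u v. u \<noteq> v \<and> u \<in> V \<and> v \<in> V}" and MsubE: "M \<subseteq> E"
    using gm unfolding graph_matching_def by auto
  obtain u0 w0 where "{v, x} = {u0, w0}" "u0 \<in> V" "w0 \<in> V"
    using Esub vx by blast
  then have "x \<in> V" by (metis insertCI insertE singletonD)
  moreover have "\<not> free_vertex V M x"
    using closed x_new unfolding mate_closed_def by blast
  ultimately obtain e where e: "e \<in> M" "x \<in> e"
    unfolding free_vertex_def by blast
  then obtain u w where uw: "e = {u, w}" "u \<noteq> w"
    using Esub MsubE by blast
  obtain w' where xw': "{x, w'} \<in> M" "w' \<noteq> x"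
    using e uw by (metis doubleton_eq_iff insertE singletonD)
  then have "mate M x = w'" using mate_eq[OF gm] by blast
  moreover have "\<not> inS s w'"
    using closed x_new xw'(1) unfolding mate_closed_def by (metis insert_commute)
  ultimately show "{x, mate M x} \<in> M" "mate M x \<noteq> x" "\<not> inS s (mate M x)"
    using xw' by simp_all
qed

lemma search_invariantD:
  assumes "search_invariant V E M s ins"
  shows "par_closed s" "par_ranked s" "blossoms_disjoint s" "mate_closed V M s"
    "labels_consistent s ins" "odd_ancestors_earlier s ins" "edges_explored E s ins"
  using assms unfolding search_invariant_def by simp_all

locale grow_situation =
  fixes V :: "'a set" and E M :: "'a set set" and s s' :: "'a st" and ins :: "'a \<Rightarrow> int"
    and v x :: 'a and b :: "'a set"
  assumes matching: "graph_matching V E M"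
    and invariant: "search_invariant V E M s ins"
    and even_phase: "even (delta s)"
    and b_node: "Bn b \<in> nodes s" and v_in_b: "v \<in> b"
    and lcp_v: "lcp s v + 2 = int (delta s)"
    and edge_vx: "{v, x} \<in> E" and x_new: "\<not> inS s x"
    and s'_eq: "s' = s \<lparr> nodes := nodes s \<union> {On x, Bn {mate M x}},
               par := (par s)(On x := Some (Bn b), Bn {mate M x} := Some (On x)),
               base := (base s)({mate M x} := mate M x),
               lcp := (lcp s)(mate M x := int (delta s)),
               lcpo := (lcpo s)(x := int (delta s) - 1) \<rparr>"
begin

abbreviation x_mate :: 'a where
  "x_mate \<equiv> mate M x"

abbreviation ins' :: "'a \<Rightarrow> int" where
  "ins' \<equiv> ins(x := int (delta s), x_mate := int (delta s))"

lemma x_mate: "{x, x_mate} \<in> M" "x_mate \<noteq> x" "\<not> inS s x_mate"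
  using mate_not_in_S[OF matching search_invariantD(4)[OF invariant] edge_vx x_new] by simp_all

lemma grown_fields:
  "nodes s' = nodes s \<union> {On x, Bn {x_mate}}"
  "par s' = (par s)(On x := Some (Bn b), Bn {x_mate} := Some (On x))"
  "lcp s' = (lcp s)(x_mate := int (delta s))"
  "lcpo s' = (lcpo s)(x := int (delta s) - 1)"
  "delta s' = delta s" "stage s' = stage s"
  using s'_eq by simp_all

lemma new_nodes_fresh: "On x \<notin> nodes s" "Bn {x_mate} \<notin> nodes s"
  using x_new x_mate(3) unfolding inS_def odds_def evens_def blossoms_def by auto

lemma grown_blossoms: "blossoms s' = insert {x_mate} (blossoms s)"
  unfolding blossoms_def grown_fields by auto

lemma grown_evens: "evens s' = insert x_mate (evens s)"
  unfolding evens_def grown_blossoms by simp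

lemma grown_odds: "odds s' = insert x (odds s)"
  unfolding odds_def grown_fields by auto

lemma grown_inS: "inS s' u \<longleftrightarrow> inS s u \<or> u = x \<or> u = x_mate"
  unfolding inS_def grown_evens grown_odds by auto

lemma ins'_old: "inS s u \<Longrightarrow> ins' u = ins u"
  using x_new x_mate(3) by auto

lemma anc_grown_old:
  assumes "n \<in> nodes s" "anc s' n k"
  shows "anc s n k"
  using assms(2) unfolding anc_def
proof (induction rule: rtrancl_induct)
  case (step k l)
  have "k \<in> nodes s"
    using anc_in_nodes[OF search_invariantD(1)[OF invariant] _ assms(1)] step.IH
    unfolding anc_def by simp
  then have "k \<noteq> On x" "k \<noteq> Bn {x_mate}"
    using new_nodes_fresh by auto
  then have "par s k = Some l"
    using step.hyps(2) unfolding grown_fields by simp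
  then show ?case using step.IH by (auto intro: rtrancl_into_rtrancl)
qed simp

text \<open>Odd vertices above \<open>x\<close> lie above the blossom of \<open>v\<close>, so they entered \<open>S\<close>
  no later than \<open>v\<close>, whose label is \<open>delta s - 2\<close>.\<close>

lemma ins_above_x_lt:
  assumes "anc s' (On x) (On z)" "On x \<noteq> On z"
  shows "ins' z < int (delta s)"
proof -
  have "anc s' (Bn b) (On z)"
    using anc_par_strict[OF assms] grown_fields(2) by simp
  then have bz: "anc s (Bn b) (On z)"
    using anc_grown_old b_node by blast
  then have "On z \<in> nodes s"
    using anc_in_nodes[OF search_invariantD(1)[OF invariant] bz b_node] by simp
  then have "inS s z" unfolding inS_def odds_def by simp
  moreover have "ins z \<le> ins v"
    using search_invariantD(6)[OF invariant] bz b_node v_in_b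
    unfolding odd_ancestors_earlier_def by fastforce
  moreover have "ins v \<le> lcp s v"
    using search_invariantD(5)[OF invariant] b_node v_in_b
    unfolding labels_consistent_def evens_def blossoms_def by auto
  ultimately show ?thesis using lcp_v ins'_old by simp
qed


lemma grown_par_closed: "par_closed s'"
  using search_invariantD(1)[OF invariant] b_node
  unfolding par_closed_def grown_fields by auto

lemma grown_par_ranked: "par_ranked s'"
proof -
  obtain rk :: "'a node \<Rightarrow> nat" where rk: "\<forall>n p. par s n = Some p \<longrightarrow> rk p < rk n"
    using search_invariantD(2)[OF invariant] unfolding par_ranked_def by blast
  define rk' where "rk' = rk(On x := rk (Bn b) + 1, Bn {x_mate} := rk (Bn b) + 2)"
  have "rk' p < rk' n" if "par s' n = Some p" for n p
  proof (cases "n = On x \<or> n = Bn {x_mate}")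
    case True
    then show ?thesis
      using that b_node new_nodes_fresh unfolding grown_fields rk'_def by auto
  next
    case False
    then have "par s n = Some p" using that unfolding grown_fields by simp
    moreover from this have "n \<in> nodes s" "p \<in> nodes s"
      using search_invariantD(1)[OF invariant] unfolding par_closed_def by auto
    ultimately show ?thesis using rk new_nodes_fresh unfolding rk'_def by auto
  qed
  then show ?thesis unfolding par_ranked_def by blast
qed

lemma grown_blossoms_disjoint: "blossoms_disjoint s'"
proof -
  have old: "\<forall>b1\<in>blossoms s. \<forall>b2\<in>blossoms s. b1 \<noteq> b2 \<longrightarrow> b1 \<inter> b2 = {}"
    "\<forall>b\<in>blossoms s. b \<noteq> {}" "evens s \<inter> odds s = {}"
    using search_invariantD(3)[OF invariant] unfolding blossoms_disjoint_def by auto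
  have "x_mate \<notin> c" if "c \<in> blossoms s" for c
    using x_mate(3) that unfolding inS_def evens_def by auto
  then have "\<forall>b1\<in>blossoms s'. \<forall>b2\<in>blossoms s'. b1 \<noteq> b2 \<longrightarrow> b1 \<inter> b2 = {}"
    using old(1) unfolding grown_blossoms by blast
  moreover have "\<forall>b\<in>blossoms s'. b \<noteq> {}"
    using old(2) unfolding grown_blossoms by simp
  moreover have "evens s' \<inter> odds s' = {}"
    using old(3) x_new x_mate unfolding grown_evens grown_odds inS_def by auto
  ultimately show ?thesis unfolding blossoms_disjoint_def by blast
qed

lemma grown_mate_closed: "mate_closed V M s'"
proof -
  have closed: "mate_closed V M s" by (rule search_invariantD(4)[OF invariant])
  have "inS s' w" if u: "inS s' u" and uw: "{u, w} \<in> M" for u w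
  proof -
    consider "inS s u" | "u = x" | "u = x_mate" using u unfolding grown_inS by blast
    then show ?thesis
    proof cases
      case 1
      then show ?thesis using closed uw unfolding mate_closed_def grown_inS by blast
    next
      case 2
      then show ?thesis
        using the_matched_unique[OF matching _ x_mate(1), of w] uw grown_inS by simp
    next
      case 3
      have mx: "{x_mate, x} \<in> M" using x_mate(1) by (simp add: insert_commute)
      then show ?thesis
        using the_matched_unique[OF matching _ mx, of w] uw 3 grown_inS by simp
    qed
  qed
  then show ?thesis using closed unfolding mate_closed_def grown_inS by blast
qed

lemma grown_labels_consistent: "labels_consistent s' ins'"
proof -
  have old: "labels_consistent s ins" by (rule search_invariantD(5)[OF invariant])
  have "ins' z = lcpo s' z + 1 \<and> odd (lcpo s' z)" if "z \<in> odds s'" for z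
  proof (cases "z = x")
    case True
    then show ?thesis using even_phase x_mate(2) unfolding grown_fields by simp
  next
    case False
    then have "z \<in> odds s" using that grown_odds by simp
    then show ?thesis
      using old False ins'_old[of z] unfolding labels_consistent_def inS_def grown_fields by auto
  qed
  moreover have "ins' y \<le> lcp s' y \<and> even (lcp s' y)" if "y \<in> evens s'" for y
  proof (cases "y = x_mate")
    case True
    then show ?thesis using even_phase unfolding grown_fields by simp
  next
    case False
    then have "y \<in> evens s" using that grown_evens by simp
    then show ?thesis
      using old False ins'_old[of y] unfolding labels_consistent_def inS_def grown_fields by auto
  qed
  moreover have "ins' u \<le> int (delta s')" if "inS s' u" for u
    using old that ins'_old unfolding labels_consistent_def grown_inS grown_fields by auto
  ultimately show ?thesis unfolding labels_consistent_def by blast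
qed

lemma grown_odd_ancestors_earlier: "odd_ancestors_earlier s' ins'"
  unfolding odd_ancestors_earlier_def
proof (intro allI impI)
  fix n z u
  assume n: "n \<in> nodes s'" and nz: "anc s' n (On z)" "n \<noteq> On z" and u: "u \<in> node_verts n"
  show "ins' z \<le> ins' u \<and> (ins' z = ins' u \<longrightarrow> u \<in> evens s' \<and> lcp s' u = ins' u)"
  proof (cases "n \<in> nodes s")
    case True
    have anc_old: "anc s n (On z)" using anc_grown_old True nz(1) by blast
    then have "inS s z"
      using anc_in_nodes[OF search_invariantD(1)[OF invariant] _ True]
      unfolding inS_def odds_def by simp
    moreover have "inS s u" by (rule node_verts_inS[OF True u])
    moreover have "ins z \<le> ins u \<and> (ins z = ins u \<longrightarrow> u \<in> evens s \<and> lcp s u = ins u)"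
      using search_invariantD(6)[OF invariant] True anc_old nz(2) u
      unfolding odd_ancestors_earlier_def by blast
    ultimately show ?thesis
      using ins'_old x_mate(3) unfolding grown_evens grown_fields by auto
  next
    case False
    then consider "n = On x" | "n = Bn {x_mate}" using n unfolding grown_fields by auto
    then show ?thesis
    proof cases
      case 1
      then show ?thesis using ins_above_x_lt nz u x_mate(2) by fastforce
    next
      case 2
      then have "anc s' (On x) (On z)"
        using anc_par_strict[OF nz] unfolding grown_fields by simp
      then show ?thesis
        using 2 u ins_above_x_lt x_mate(2) unfolding grown_evens grown_fields by fastforce
    qed
  qed
qed

lemma grown_edges_explored: "edges_explored E s' ins'"
  unfolding edges_explored_def
proof (intro allI impI)
  fix y w
  assume y: "y \<in> evens s'" and yw: "{y, w} \<in> E"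
    and ripe: "lcp s' y + 2 < int (delta s') \<or> lcp s' y + 2 = int (delta s') \<and> stage s' \<noteq> Growth"
  have "y \<noteq> x_mate" using ripe unfolding grown_fields by auto
  then have "y \<in> evens s" "lcp s' y = lcp s y"
    using y unfolding grown_evens grown_fields by auto
  then have "inS s w \<and> ins w \<le> lcp s y + 2"
    using search_invariantD(7)[OF invariant] yw ripe
    unfolding edges_explored_def grown_fields by auto
  then show "inS s' w \<and> ins' w \<le> lcp s' y + 2"
    using ins'_old grown_inS \<open>lcp s' y = lcp s y\<close> by auto
qed

lemma grown_search_invariant: "search_invariant V E M s' ins'"
  unfolding search_invariant_def
  using grown_par_closed grown_par_ranked grown_blossoms_disjoint grown_mate_closed
    grown_labels_consistent grown_odd_ancestors_earlier grown_edges_explored by blast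

lemma grown_even_labels_kept: "even_labels_kept s s'"
  using x_mate(3) unfolding even_labels_kept_def grown_evens grown_fields inS_def by auto

end

lemma lcpo_above_bridge_end:
  assumes inv: "search_invariant V E M s ins"
    and y: "y \<in> evens s" and w: "w \<in> evens s" and wy: "{w, y} \<in> E"
    and sum: "lcp s w + lcp s y = 2 * int (delta s) - 2" and not_growing: "stage s \<noteq> Growth"
    and skew: "lcp s y \<noteq> lcp s w + 2"
    and z: "anc s (Bn (blossom_of s y)) (On z)"
  shows "lcpo s z \<le> lcp s y - 1" "lcpo s z \<le> lcp s w"
proof -
  have "blossom_of s y \<in> blossoms s" "y \<in> blossom_of s y"
    using blossom_of_mem[OF _ y] search_invariantD(3)[OF inv]
    unfolding blossoms_disjoint_def by simp_all
  then have By: "Bn (blossom_of s y) \<in> nodes s" "y \<in> node_verts (Bn (blossom_of s y))"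
    unfolding blossoms_def by simp_all
  have "On z \<in> nodes s" using anc_in_nodes[OF search_invariantD(1)[OF inv] z By(1)] .
  then have z_ins: "ins z = lcpo s z + 1"
    using search_invariantD(5)[OF inv] unfolding labels_consistent_def odds_def by simp
  have y_ins: "ins y \<le> lcp s y"
    using search_invariantD(5)[OF inv] y unfolding labels_consistent_def by blast
  have zy: "ins z \<le> ins y" "ins z = ins y \<Longrightarrow> lcp s y = ins y"
    using search_invariantD(6)[OF inv] By z unfolding odd_ancestors_earlier_def by blast+
  then show y_bound: "lcpo s z \<le> lcp s y - 1" using z_ins y_ins by simp
  show "lcpo s z \<le> lcp s w"
  proof (cases "lcp s y \<le> lcp s w")
    case True
    then show ?thesis using y_bound by simp
  next
    case False
    then have "lcp s w + 2 < int (delta s) \<or> lcp s w + 2 = int (delta s) \<and> stage s \<noteq> Growth"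
      using sum not_growing by auto
    then have "ins y \<le> lcp s w + 2"
      using search_invariantD(7)[OF inv] w wy unfolding edges_explored_def by blast
    moreover have "ins z \<noteq> lcp s w + 2"
      using zy skew \<open>ins y \<le> lcp s w + 2\<close> by force
    ultimately show ?thesis using zy(1) z_ins by simp
  qed
qed

locale bridge_situation =
  fixes V :: "'a set" and E M :: "'a set set" and s s' :: "'a st" and ins :: "'a \<Rightarrow> int"
    and x y :: 'a and b NB Z :: "'a set" and P :: "'a node set"
  assumes invariant: "search_invariant V E M s ins"
    and stage_bridges: "stage s = Bridges"
    and bridge: "bridge_cond E M s x y"
    and lca: "is_lca s (Bn (blossom_of s x)) (Bn (blossom_of s y)) (Bn b)"
    and P_def: "P = {n. (anc s (Bn (blossom_of s x)) n \<or> anc s (Bn (blossom_of s y)) n)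
                        \<and> anc s n (Bn b)}"
    and Z_def: "Z = {z. On z \<in> P}"
    and NB_def: "NB = \<Union> {c. Bn c \<in> P} \<union> Z"
    and s'_eq: "s' = s \<lparr> nodes := (nodes s - P) \<union> {Bn NB},
                    par := (\<lambda>n. if n = Bn NB then par s (Bn b)
                                 else if n \<in> P then None
                                 else (case par s n of None \<Rightarrow> None
                                       | Some p \<Rightarrow> if p \<in> P then Some (Bn NB) else Some p)),
                    base := (base s)(NB := base s b),
                    lcp := (\<lambda>v. if v \<in> Z then lcp s x + 1 + lcp s y - lcpo s v else lcp s v) \<rparr>"
begin

lemma bridge_facts:
  "x \<in> evens s" "y \<in> evens s" "{x, y} \<in> E" "lcp s x + lcp s y = 2 * int (delta s) - 2"
  using bridge unfolding bridge_cond_def by auto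

lemma merged_fields:
  "nodes s' = (nodes s - P) \<union> {Bn NB}"
  "par s' n = (if n = Bn NB then par s (Bn b)
                else if n \<in> P then None
                else (case par s n of None \<Rightarrow> None
                      | Some p \<Rightarrow> if p \<in> P then Some (Bn NB) else Some p))"
  "lcp s' v = (if v \<in> Z then lcp s x + 1 + lcp s y - lcpo s v else lcp s v)"
  "lcpo s' = lcpo s" "delta s' = delta s" "stage s' = stage s"
  using s'_eq by simp_all

lemma endpoint_blossom_nodes: "Bn (blossom_of s x) \<in> nodes s" "Bn (blossom_of s y) \<in> nodes s"
  using blossom_of_mem(1)[OF _ bridge_facts(1)] blossom_of_mem(1)[OF _ bridge_facts(2)]
    search_invariantD(3)[OF invariant]
  unfolding blossoms_disjoint_def blossoms_def by simp_all

lemma path_nodes: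
  assumes "n \<in> P"
  shows "n \<in> nodes s"
proof -
  have "anc s (Bn (blossom_of s x)) n \<or> anc s (Bn (blossom_of s y)) n"
    using assms unfolding P_def by simp
  then show ?thesis
    using anc_in_nodes[OF search_invariantD(1)[OF invariant]] endpoint_blossom_nodes by blast
qed

lemma path_below_lca: "n \<in> P \<Longrightarrow> anc s n (Bn b)"
  unfolding P_def by simp

lemma lca_on_path: "Bn b \<in> P"
  using lca anc_refl unfolding P_def is_lca_def by blast

lemma lca_node: "Bn b \<in> nodes s"
  using path_nodes lca_on_path by blast

lemma par_lca_off_path:
  assumes "par s (Bn b) = Some q"
  shows "q \<notin> P"
proof
  assume "q \<in> P"
  obtain rk :: "'a node \<Rightarrow> nat" where rk: "\<forall>n p. par s n = Some p \<longrightarrow> rk p < rk n"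
    using search_invariantD(2)[OF invariant] unfolding par_ranked_def by blast
  have "rk (Bn b) \<le> rk q" using anc_rank_le[OF rk] path_below_lca[OF \<open>q \<in> P\<close>] .
  moreover have "rk q < rk (Bn b)" using rk assms by blast
  ultimately show False by simp
qed

lemma Z_odds: "Z \<subseteq> odds s"
  using path_nodes unfolding Z_def odds_def by blast

lemma NB_mem: "v \<in> NB \<longleftrightarrow> (\<exists>c. Bn c \<in> P \<and> v \<in> c) \<or> v \<in> Z"
  unfolding NB_def by blast

lemma lca_subset_NB: "b \<subseteq> NB"
  using NB_mem lca_on_path by blast

lemma merged_blossoms: "blossoms s' = {c. Bn c \<in> nodes s \<and> Bn c \<notin> P} \<union> {NB}"
  unfolding blossoms_def merged_fields by blast

lemma merged_evens: "evens s' = evens s \<union> Z"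
proof
  show "evens s' \<subseteq> evens s \<union> Z"
  proof
    fix v
    assume "v \<in> evens s'"
    then obtain c where c: "c \<in> blossoms s'" "v \<in> c" unfolding evens_def by blast
    show "v \<in> evens s \<union> Z"
    proof (cases "c = NB")
      case True
      then have "(\<exists>c. Bn c \<in> P \<and> v \<in> c) \<or> v \<in> Z" using c NB_mem by simp
      then show ?thesis using path_nodes unfolding evens_def blossoms_def by blast
    next
      case False
      then have "Bn c \<in> nodes s" using c merged_blossoms by blast
      then show ?thesis using c unfolding evens_def blossoms_def by blast
    qed
  qed
  show "evens s \<union> Z \<subseteq> evens s'"
  proof
    fix v
    assume "v \<in> evens s \<union> Z"
    then consider "v \<in> Z" | c where "Bn c \<in> nodes s" "v \<in> c"
      unfolding evens_def blossoms_def by blast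
    then show "v \<in> evens s'"
    proof cases
      case 1
      then show ?thesis using NB_mem unfolding evens_def merged_blossoms by blast
    next
      case 2
      then show ?thesis
        using NB_mem[of v] unfolding evens_def merged_blossoms by (cases "Bn c \<in> P") blast+
    qed
  qed
qed

lemma merged_odds: "odds s' = odds s - Z"
  unfolding odds_def merged_fields Z_def by blast

lemma merged_inS: "inS s' u \<longleftrightarrow> inS s u"
  using Z_odds unfolding inS_def merged_evens merged_odds by blast

lemma merged_node_fresh: "Bn NB \<notin> nodes s - P"
proof
  assume "Bn NB \<in> nodes s - P"
  then have "NB \<in> blossoms s" "b \<in> blossoms s" "NB \<noteq> b"
    using lca_node lca_on_path unfolding blossoms_def by auto
  then have "NB \<inter> b = {}" "b \<noteq> {}"
    using search_invariantD(3)[OF invariant] unfolding blossoms_disjoint_def by blast+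
  then show False using lca_subset_NB by blast
qed


lemma par_mergedE:
  assumes "par s' n = Some p"
  obtains (merged) "n = Bn NB" "par s (Bn b) = Some p" "p \<in> nodes s - P"
  | (old) q where "n \<noteq> Bn NB" "n \<notin> P" "par s n = Some q" "n \<in> nodes s" "q \<in> nodes s"
      "p = (if q \<in> P then Bn NB else q)"
proof (cases "n = Bn NB")
  case True
  then have "par s (Bn b) = Some p" using assms merged_fields(2) by simp
  moreover from this have "p \<in> nodes s - P"
    using par_lca_off_path search_invariantD(1)[OF invariant] unfolding par_closed_def by blast
  ultimately show ?thesis using True merged by blast
next
  case False
  then have "n \<notin> P" using assms merged_fields(2)[of n] by (auto split: if_splits)
  moreover obtain q where q: "par s n = Some q"
    using assms merged_fields(2)[of n] False \<open>n \<notin> P\<close> by (auto split: option.splits)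
  moreover have "n \<in> nodes s" "q \<in> nodes s"
    using q search_invariantD(1)[OF invariant] unfolding par_closed_def by auto
  moreover have "p = (if q \<in> P then Bn NB else q)"
    using assms merged_fields(2)[of n] False \<open>n \<notin> P\<close> q by auto
  ultimately show ?thesis using False old by blast
qed

abbreviation unmerge :: "'a node \<Rightarrow> 'a node" where
  "unmerge n \<equiv> if n = Bn NB then Bn b else n"

lemma anc_merged:
  assumes "anc s' n k"
  shows "anc s (unmerge n) (unmerge k)"
  using assms unfolding anc_def[of s']
proof (induction rule: rtrancl_induct)
  case base
  show ?case by (rule anc_refl)
next
  case (step k l)
  then have "par s' k = Some l" by simp
  then have "anc s (unmerge k) (unmerge l)"
  proof (cases rule: par_mergedE)
    case merged
    then show ?thesis using merged_node_fresh anc_par by auto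
  next
    case (old q)
    show ?thesis
    proof (cases "q \<in> P")
      case True
      then show ?thesis
        using old anc_trans[OF anc_par[OF old(3)] path_below_lca] by simp
    next
      case False
      then show ?thesis using old merged_node_fresh anc_par[OF old(3)] by auto
    qed
  qed
  then show ?case using step.IH anc_trans by blast
qed

lemma merged_par_closed: "par_closed s'"
  unfolding par_closed_def
proof (intro allI impI)
  fix n p
  assume "par s' n = Some p"
  then show "n \<in> nodes s' \<and> p \<in> nodes s'"
    by (cases rule: par_mergedE) (auto simp: merged_fields(1))
qed

lemma merged_par_ranked: "par_ranked s'"
proof -
  obtain rk :: "'a node \<Rightarrow> nat" where rk: "\<forall>n p. par s n = Some p \<longrightarrow> rk p < rk n"
    using search_invariantD(2)[OF invariant] unfolding par_ranked_def by blast
  define rk' where "rk' = rk(Bn NB := rk (Bn b))"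
  have "rk' p < rk' n" if "par s' n = Some p" for n p
    using that
  proof (cases rule: par_mergedE)
    case merged
    then show ?thesis using rk merged_node_fresh unfolding rk'_def by auto
  next
    case (old q)
    have "rk q < rk n" using rk old(3) by blast
    moreover have "rk (Bn b) \<le> rk q" if "q \<in> P"
      using anc_rank_le[OF rk path_below_lca[OF that]] .
    ultimately show ?thesis using old merged_node_fresh unfolding rk'_def by auto
  qed
  then show ?thesis unfolding par_ranked_def by blast
qed

lemma blossoms_disjoint_parts:
  "\<forall>b1\<in>blossoms s. \<forall>b2\<in>blossoms s. b1 \<noteq> b2 \<longrightarrow> b1 \<inter> b2 = {}"
  "\<forall>b\<in>blossoms s. b \<noteq> {}" "evens s \<inter> odds s = {}"
  using search_invariantD(3)[OF invariant] unfolding blossoms_disjoint_def by auto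

lemma off_path_disjoint_merged:
  assumes "Bn c \<in> nodes s" "Bn c \<notin> P"
  shows "c \<inter> NB = {}"
proof -
  have "c \<inter> c' = {}" if "Bn c' \<in> P" for c'
    using blossoms_disjoint_parts(1) path_nodes[OF that] assms that
    unfolding blossoms_def by auto
  moreover have "c \<inter> Z = {}"
    using blossoms_disjoint_parts(3) Z_odds assms(1) unfolding evens_def blossoms_def by blast
  ultimately show ?thesis using NB_mem by blast
qed

lemma merged_blossoms_disjoint: "blossoms_disjoint s'"
proof -
  have "\<forall>b1\<in>blossoms s'. \<forall>b2\<in>blossoms s'. b1 \<noteq> b2 \<longrightarrow> b1 \<inter> b2 = {}"
  proof (intro ballI impI)
    fix b1 b2
    assume b1: "b1 \<in> blossoms s'" and b2: "b2 \<in> blossoms s'" and ne: "b1 \<noteq> b2"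
    show "b1 \<inter> b2 = {}"
    proof (cases "b1 = NB")
      case True
      then have "Bn b2 \<in> nodes s" "Bn b2 \<notin> P" using b2 ne merged_blossoms by auto
      then show ?thesis using off_path_disjoint_merged True by blast
    next
      case False
      then have b1_old: "Bn b1 \<in> nodes s" "Bn b1 \<notin> P" using b1 merged_blossoms by auto
      show ?thesis
      proof (cases "b2 = NB")
        case True
        then show ?thesis using off_path_disjoint_merged b1_old by blast
      next
        case False
        then have "Bn b2 \<in> nodes s" using b2 merged_blossoms by auto
        then show ?thesis
          using blossoms_disjoint_parts(1) b1_old ne unfolding blossoms_def by blast
      qed
    qed
  qed
  moreover have "c \<noteq> {}" if "c \<in> blossoms s'" for c
  proof (cases "c = NB")
    case True
    then show ?thesis
      using lca_subset_NB blossoms_disjoint_parts(2) lca_node unfolding blossoms_def by blast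
  next
    case False
    then show ?thesis
      using that merged_blossoms blossoms_disjoint_parts(2) unfolding blossoms_def by blast
  qed
  moreover have "evens s' \<inter> odds s' = {}"
    using blossoms_disjoint_parts(3) unfolding merged_evens merged_odds by blast
  ultimately show ?thesis unfolding blossoms_disjoint_def by blast
qed

lemma merged_mate_closed: "mate_closed V M s'"
  using search_invariantD(4)[OF invariant] unfolding mate_closed_def merged_inS .


lemma Z_labels:
  assumes "v \<in> Z"
  shows "lcp s' v = 2 * int (delta s) - 1 - lcpo s v" "ins v = lcpo s v + 1"
    "odd (lcpo s v)" "ins v \<le> int (delta s)"
proof -
  have "v \<in> odds s" using assms Z_odds by blast
  then show "ins v = lcpo s v + 1" "odd (lcpo s v)" "ins v \<le> int (delta s)"
    using search_invariantD(5)[OF invariant] unfolding labels_consistent_def inS_def by auto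
  show "lcp s' v = 2 * int (delta s) - 1 - lcpo s v"
    using assms bridge_facts(4) unfolding merged_fields by simp
qed

lemma merged_labels_consistent: "labels_consistent s' ins"
proof -
  have old: "\<forall>z\<in>odds s. ins z = lcpo s z + 1 \<and> odd (lcpo s z)"
    "\<forall>y\<in>evens s. ins y \<le> lcp s y \<and> even (lcp s y)"
    "\<forall>u. inS s u \<longrightarrow> ins u \<le> int (delta s)"
    using search_invariantD(5)[OF invariant] unfolding labels_consistent_def by auto
  have "ins v \<le> lcp s' v \<and> even (lcp s' v)" if "v \<in> evens s'" for v
  proof (cases "v \<in> Z")
    case True
    have "even (2 * int (delta s) - 1 - lcpo s v)" using Z_labels(3)[OF True] by presburger
    then show ?thesis using Z_labels[OF True] by simp
  next
    case False
    then show ?thesis using that old(2) unfolding merged_evens merged_fields by simp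
  qed
  then show ?thesis
    using old(1,3) unfolding labels_consistent_def merged_odds merged_inS merged_fields by simp
qed

lemma merged_odd_ancestors_earlier: "odd_ancestors_earlier s' ins"
  unfolding odd_ancestors_earlier_def
proof (intro allI impI)
  fix n z u
  assume n: "n \<in> nodes s'" and nz: "anc s' n (On z)" "n \<noteq> On z" and u: "u \<in> node_verts n"
  have "On z \<in> nodes s'" using anc_in_nodes[OF merged_par_closed nz(1) n] .
  then have z_off: "On z \<notin> P" using merged_fields(1) by auto
  have unmerged: "anc s (unmerge n) (On z)" using anc_merged[OF nz(1)] by simp
  obtain n0 where n0: "n0 \<in> nodes s" "anc s n0 (On z)" "n0 \<noteq> On z" "u \<in> node_verts n0"
  proof (cases "n = Bn NB")
    case True
    then have "(\<exists>c. Bn c \<in> P \<and> u \<in> c) \<or> On u \<in> P"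
      using u NB_mem unfolding Z_def by simp
    then obtain q where q: "q \<in> P" "u \<in> node_verts q" by force
    have "anc s q (On z)"
      using anc_trans[OF path_below_lca[OF q(1)]] unmerged True by simp
    then show ?thesis using that path_nodes[OF q(1)] q z_off by blast
  next
    case False
    then show ?thesis using that n nz(2) u unmerged merged_fields(1) by auto
  qed
  then have "ins z \<le> ins u \<and> (ins z = ins u \<longrightarrow> u \<in> evens s \<and> lcp s u = ins u)"
    using search_invariantD(6)[OF invariant] unfolding odd_ancestors_earlier_def by blast
  moreover have "u \<in> evens s \<Longrightarrow> lcp s' u = lcp s u"
    using Z_odds search_invariantD(3)[OF invariant]
    unfolding merged_fields blossoms_disjoint_def by auto
  ultimately show "ins z \<le> ins u \<and> (ins z = ins u \<longrightarrow> u \<in> evens s' \<and> lcp s' u = ins u)"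
    unfolding merged_evens by auto
qed

lemma merged_edges_explored: "edges_explored E s' ins"
  unfolding edges_explored_def
proof (intro allI impI)
  fix v w
  assume v: "v \<in> evens s'" and vw: "{v, w} \<in> E"
    and ripe: "lcp s' v + 2 < int (delta s') \<or> lcp s' v + 2 = int (delta s') \<and> stage s' \<noteq> Growth"
  have "v \<notin> Z"
  proof
    assume "v \<in> Z"
    then show False using Z_labels[of v] ripe unfolding merged_fields(5) by simp
  qed
  then have "v \<in> evens s" "lcp s' v = lcp s v"
    using v unfolding merged_evens merged_fields by auto
  then show "inS s' w \<and> ins w \<le> lcp s' v + 2"
    using search_invariantD(7)[OF invariant] vw ripe
    unfolding edges_explored_def merged_inS merged_fields(5,6) by auto
qed

lemma merged_search_invariant: "search_invariant V E M s' ins"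
  unfolding search_invariant_def
  using merged_par_closed merged_par_ranked merged_blossoms_disjoint merged_mate_closed
    merged_labels_consistent merged_odd_ancestors_earlier merged_edges_explored by blast

lemma merged_even_labels_kept: "even_labels_kept s s'"
  using Z_odds search_invariantD(3)[OF invariant]
  unfolding even_labels_kept_def merged_evens merged_fields blossoms_disjoint_def by auto


lemma new_even_lcp_gt:
  assumes "lcp s x \<noteq> lcp s y + 2" "lcp s y \<noteq> lcp s x + 2" and z: "z \<in> Z"
  shows "lcp s' z > max (lcp s x) (lcp s y)"
proof -
  have not_growing: "stage s \<noteq> Growth" using stage_bridges by simp
  have "anc s (Bn (blossom_of s x)) (On z) \<or> anc s (Bn (blossom_of s y)) (On z)"
    using z unfolding Z_def P_def by simp
  then have "lcpo s z \<le> lcp s x - 1 \<and> lcpo s z \<le> lcp s y \<or>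
      lcpo s z \<le> lcp s y - 1 \<and> lcpo s z \<le> lcp s x"
    using lcpo_above_bridge_end[OF invariant bridge_facts(1,2) _ _ not_growing assms(1)]
      lcpo_above_bridge_end[OF invariant bridge_facts(2,1,3,4) not_growing assms(2)]
      bridge_facts(3,4)
    by (metis add.commute insert_commute)
  then show ?thesis using z unfolding merged_fields by auto
qed

end

lemma grow_step_search_invariant:
  assumes gm: "graph_matching V E M" and inv: "search_invariant V E M s ins"
    and "grow_step E M s s'"
  shows "\<exists>ins'. search_invariant V E M s' ins'" "even_labels_kept s s'"
proof -
  obtain v x b where "grow_situation V E M s s' ins v x b"
    using assms unfolding grow_step_def grow_situation_def by blast
  then show "\<exists>ins'. search_invariant V E M s' ins'" "even_labels_kept s s'"
    using grow_situation.grown_search_invariant grow_situation.grown_even_labels_kept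
    by fast+
qed

lemma bridge_step_situation:
  assumes "search_invariant V E M s ins" "bridge_step E M s x y s'"
  obtains b NB Z P where "bridge_situation V E M s s' ins x y b NB Z P"
  using assms unfolding bridge_step_def bridge_situation_def Let_def by blast

lemma bridge_step_search_invariant:
  assumes "search_invariant V E M s ins" "bridge_step E M s x y s'"
  shows "search_invariant V E M s' ins" "even_labels_kept s s'"
  using bridge_step_situation[OF assms]
    bridge_situation.merged_search_invariant bridge_situation.merged_even_labels_kept by metis+

lemma search_invariant_same_forest:
  assumes inv: "search_invariant V E M s ins"
    and same: "nodes s' = nodes s" "par s' = par s" "lcp s' = lcp s" "lcpo s' = lcpo s"
    and later: "delta s \<le> delta s'" and explored: "edges_explored E s' ins"
  shows "search_invariant V E M s' ins"
proof -
  have sets: "blossoms s' = blossoms s" "evens s' = evens s" "odds s' = odds s" "inS s' = inS s"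
    unfolding inS_def[abs_def] evens_def odds_def blossoms_def same by simp_all
  have "anc s' = anc s" unfolding anc_def[abs_def] same by simp
  then have "par_closed s'" "par_ranked s'" "blossoms_disjoint s'" "mate_closed V M s'"
    "odd_ancestors_earlier s' ins"
    using search_invariantD[OF inv]
    unfolding par_closed_def par_ranked_def blossoms_disjoint_def mate_closed_def
      odd_ancestors_earlier_def sets same by simp_all
  moreover have "labels_consistent s' ins"
    using search_invariantD(5)[OF inv] later
    unfolding labels_consistent_def sets same by (meson of_nat_mono order_trans)
  ultimately show ?thesis using explored unfolding search_invariant_def by simp
qed

lemma end_growth_edges_explored:
  assumes inv: "search_invariant V E M s ins" and "end_growth E s s'"
  shows "edges_explored E s' ins"
  unfolding edges_explored_def
proof (intro allI impI)
  fix y w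
  assume y: "y \<in> evens s'" and yw: "{y, w} \<in> E"
    and ripe: "lcp s' y + 2 < int (delta s') \<or> lcp s' y + 2 = int (delta s') \<and> stage s' \<noteq> Growth"
  have s': "stage s = Growth" "odd (delta s) \<or> \<not> growth_possible E s"
    "evens s' = evens s" "lcp s' = lcp s" "delta s' = delta s"
    using assms(2) unfolding end_growth_def evens_def blossoms_def by auto
  show "inS s' w \<and> ins w \<le> lcp s' y + 2"
  proof (cases "lcp s y + 2 < int (delta s)")
    case True
    then show ?thesis
      using search_invariantD(7)[OF inv] y yw s'(3-5) assms(2)
      unfolding edges_explored_def end_growth_def inS_def odds_def by auto
  next
    case False
    then have at_front: "lcp s y + 2 = int (delta s)" using ripe s'(4,5) by simp
    have "even (lcp s y)"
      using search_invariantD(5)[OF inv] y s'(3) unfolding labels_consistent_def by simp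
    then have "even (delta s)" using at_front by presburger
    then have "\<not> growth_possible E s" using s'(2) by simp
    then have "inS s w"
      using y yw at_front s'(3) unfolding growth_possible_def evens_def blossoms_def by blast
    then show ?thesis
      using search_invariantD(5)[OF inv] at_front assms(2)
      unfolding labels_consistent_def end_growth_def inS_def evens_def odds_def blossoms_def
      by auto
  qed
qed

lemma end_growth_search_invariant:
  assumes "search_invariant V E M s ins" "end_growth E s s'"
  shows "search_invariant V E M s' ins" "even_labels_kept s s'"
proof -
  have same: "nodes s' = nodes s" "par s' = par s" "lcp s' = lcp s" "lcpo s' = lcpo s"
    "delta s' = delta s"
    using assms(2) unfolding end_growth_def by simp_all
  show "search_invariant V E M s' ins"
    using search_invariant_same_forest[OF assms(1) same(1-4)] end_growth_edges_explored[OF assms]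
      same(5) by simp
  show "even_labels_kept s s'"
    unfolding even_labels_kept_def evens_def blossoms_def same by simp
qed

lemma bridges_stage_search_invariant:
  assumes inv: "search_invariant V E M s ins" and bridges: "stage s = Bridges"
    and same: "nodes s' = nodes s" "par s' = par s" "lcp s' = lcp s" "lcpo s' = lcpo s"
    and later: "delta s' = delta s \<or> (delta s' = Suc (delta s) \<and> stage s' = Growth)"
  shows "search_invariant V E M s' ins" "even_labels_kept s s'"
proof -
  have sets: "evens s' = evens s" "inS s' = inS s"
    unfolding inS_def[abs_def] evens_def odds_def blossoms_def same by simp_all
  have "edges_explored E s' ins"
    unfolding edges_explored_def sets same
  proof (intro allI impI)
    fix y w
    assume y: "y \<in> evens s" and yw: "{y, w} \<in> E"
      and ripe: "lcp s y + 2 < int (delta s') \<or> lcp s y + 2 = int (delta s') \<and> stage s' \<noteq> Growth"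
    have "lcp s y + 2 \<le> int (delta s)" using ripe later by auto
    then show "inS s w \<and> ins w \<le> lcp s y + 2"
      using search_invariantD(7)[OF inv] y yw bridges unfolding edges_explored_def by force
  qed
  then show "search_invariant V E M s' ins"
    using search_invariant_same_forest[OF inv same] later by auto
  show "even_labels_kept s s'"
    unfolding even_labels_kept_def sets same by simp
qed

lemma init_search_invariant: "search_invariant V E M (init_st V M) (\<lambda>_. 0)"
proof -
  let ?s = "init_st V M"
  have fields: "nodes ?s = {Bn {v} | v. free_vertex V M v}" "par ?s = (\<lambda>_. None)"
    "lcp ?s = (\<lambda>_. 0)" "delta ?s = 0"
    unfolding init_st_def by simp_all
  have blossoms: "blossoms ?s = {{v} | v. free_vertex V M v}"
    unfolding blossoms_def fields by blast
  have evens: "evens ?s = {v. free_vertex V M v}"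
    unfolding evens_def blossoms by blast
  have odds: "odds ?s = {}"
    unfolding odds_def fields by blast
  have inS: "inS ?s u \<longleftrightarrow> free_vertex V M u" for u
    unfolding inS_def evens odds by simp
  have anc: "anc ?s n k \<longleftrightarrow> n = k" for n k
    unfolding anc_def fields by (auto elim: rtranclE)
  have "par_closed ?s" "par_ranked ?s" "blossoms_disjoint ?s"
    unfolding par_closed_def par_ranked_def blossoms_disjoint_def blossoms odds fields by auto
  moreover have "mate_closed V M ?s"
    unfolding mate_closed_def inS free_vertex_def by blast
  moreover have "labels_consistent ?s (\<lambda>_. 0)" "odd_ancestors_earlier ?s (\<lambda>_. 0)"
    "edges_explored E ?s (\<lambda>_. 0)"
    unfolding labels_consistent_def odd_ancestors_earlier_def edges_explored_def odds evens anc fields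
    by simp_all
  ultimately show ?thesis unfolding search_invariant_def by simp
qed

lemma step_search_invariant:
  assumes gm: "graph_matching V E M" and inv: "search_invariant V E M s ins"
    and "step E M s s'"
  shows "\<exists>ins'. search_invariant V E M s' ins'" "even_labels_kept s s'"
proof -
  consider (grow) "grow_step E M s s'" | (end_growth) "end_growth E s s'"
    | (bridge) x y where "bridge_step E M s x y s'"
    | (stop) x y where "stop_step E M s x y s'" | (end_phase) "end_phase E M s s'"
    using assms(3) unfolding step_def by blast
  then have "(\<exists>ins'. search_invariant V E M s' ins') \<and> even_labels_kept s s'"
  proof cases
    case grow
    then show ?thesis using grow_step_search_invariant[OF gm inv] by blast
  next
    case end_growth
    then show ?thesis using end_growth_search_invariant[OF inv] by blast
  next
    case bridge
    then show ?thesis using bridge_step_search_invariant[OF inv] by blast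
  next
    case stop
    then have "stage s = Bridges" "s' = s\<lparr>stage := Stopped\<rparr>"
      unfolding stop_step_def by simp_all
    then show ?thesis using bridges_stage_search_invariant[OF inv, of s'] by auto
  next
    case end_phase
    then have "stage s = Bridges" "s' = s\<lparr>delta := Suc (delta s), stage := Growth\<rparr>"
      unfolding end_phase_def by simp_all
    then show ?thesis using bridges_stage_search_invariant[OF inv, of s'] by auto
  qed
  then show "\<exists>ins'. search_invariant V E M s' ins'" "even_labels_kept s s'" by simp_all
qed

lemma reachable_search_invariant:
  assumes "graph_matching V E M" "reachable V E M s"
  shows "\<exists>ins. search_invariant V E M s ins"
  using assms(2) unfolding reachable_def
proof (induction rule: rtranclp_induct)
  case base
  then show ?case using init_search_invariant by blast
next
  case (step t u)
  then show ?case using step_search_invariant(1)[OF assms(1)] by blast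
qed

lemma phase_steps_keep_even_labels:
  assumes gm: "graph_matching V E M" and inv: "search_invariant V E M s ins"
    and steps: "(step_in_phase E M d)\<^sup>*\<^sup>* s t" and phase: "delta s = d"
  shows "even_labels_kept s t" "delta t = d"
proof -
  from steps have "(\<exists>ins. search_invariant V E M t ins) \<and> even_labels_kept s t \<and> delta t = d"
  proof (induction rule: rtranclp_induct)
    case base
    then show ?case using inv phase even_labels_kept_refl by blast
  next
    case (step t u)
    then show ?case
      using step_search_invariant[OF gm] even_labels_kept_trans unfolding step_in_phase_def by blast
  qed
  then show "even_labels_kept s t" "delta t = d" by simp_all
qed

theorem lemma5:
  fixes V :: "'a set" and E M :: "'a set set" and s s' :: "'a st" and x y z :: 'a
  assumes "graph_matching V E M"
    and "reachable V E M s"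
    and "bridge_step E M s x y s'"
    and "\<bar>lcp s x - lcp s y\<bar> \<notin> {0, 2}"
    and "z \<notin> evens s" and "z \<in> evens s'"
  shows "lcp s' z > max (lcp s x) (lcp s y) \<and>
    (\<forall>t w. (step_in_phase E M (delta s))\<^sup>*\<^sup>* s' t \<and> stage t = Bridges \<and> bridge_cond E M t z w
       \<longrightarrow> \<bar>lcp t z - lcp t w\<bar> > \<bar>lcp s x - lcp s y\<bar>)"
proof -
  obtain ins where inv: "search_invariant V E M s ins"
    using reachable_search_invariant[OF assms(1,2)] by blast
  obtain b NB Z P where bs: "bridge_situation V E M s s' ins x y b NB Z P"
    using bridge_step_situation[OF inv assms(3)] .
  interpret bridge_situation V E M s s' ins x y b NB Z P by (rule bs)
  have "z \<in> Z" using assms(5,6) merged_evens by simp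
  \<comment> \<open>only the exclusion of skewness 2 is needed; skewness 0 is harmless\<close>
  then have z_gt: "lcp s' z > max (lcp s x) (lcp s y)"
    using new_even_lcp_gt assms(4) by force
  have "\<bar>lcp t z - lcp t w\<bar> > \<bar>lcp s x - lcp s y\<bar>"
    if steps: "(step_in_phase E M (delta s))\<^sup>*\<^sup>* s' t" and zw: "bridge_cond E M t z w" for t w
  proof -
    have "even_labels_kept s' t" "delta t = delta s"
      using phase_steps_keep_even_labels[OF assms(1) merged_search_invariant steps]
      merged_fields(5) by simp_all
    then have "lcp t z = lcp s' z" "lcp t z + lcp t w = 2 * int (delta s) - 2"
      using assms(6) zw unfolding even_labels_kept_def bridge_cond_def by auto
    then show ?thesis using z_gt bridge_facts(4) by linarith
  qed
  then show ?thesis using z_gt by blast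
qed

end
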